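(* Let $A\in\{\mathbb Z,\mathbb R\}$ and let $X\subset\mathbb R^d$ be a bounded subset whose convex hull is full-dimensional. Then every $A$-$X$-free convex body in $\mathbb R^d$ is contained in a full-dimensional $A$-$X$-free convex body.
   Context: A convex body in $\mathbb R^d$ is a nonempty compact convex subset of $\mathbb R^d$. An $A$-unimodular transformation is a map $T(x)=Mx+b$ with $M\in \mathrm{GL}_d(\mathbb Z)$ and $b\in A^d$; an $A$-unimodular copy of $X$ is $T(X)$ for such a $T$. A convex set is $A$-$X$-free if its relative interior contains no $A$-unimodular copy of $X$ (the relative interior of a single point is that point). *)

theory Defs
  imports "HOL-Analysis.Analysis"
begin

definition GL_int :: "(real^'n^'n) set" where
  "GL_int = {M. (\<forall>i j. M $ i $ j \<in> \<int>) \<and> invertible M \<and>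
                (\<forall>i j. matrix_inv M $ i $ j \<in> \<int>)}"

definition unimodular_copy :: "real set \<Rightarrow> (real^'n) set \<Rightarrow> (real^'n) set \<Rightarrow> bool" where
  "unimodular_copy A X Y \<longleftrightarrow>
     (\<exists>M b. M \<in> GL_int \<and> (\<forall>i. b $ i \<in> A) \<and> Y = (\<lambda>x. M *v x + b) ` X)"

definition AX_free :: "real set \<Rightarrow> (real^'n) set \<Rightarrow> (real^'n) set \<Rightarrow> bool" where
  "AX_free A X K \<longleftrightarrow> \<not> (\<exists>Y. unimodular_copy A X Y \<and> Y \<subseteq> rel_interior K)"

definition convex_body :: "(real^'n) set \<Rightarrow> bool" where
  "convex_body K \<longleftrightarrow> K \<noteq> {} \<and> compact K \<and> convex K"

end

theory Submission
  imports Defs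
begin

text \<open>
  If K is already full-dimensional there is nothing to do. Otherwise thicken K by a ball of
  radius 1/(n+1). Were none of these thickenings A-X-free, there would be integral matrices
  M_n and translations b_n with M_n X + b_n within distance 1/(n+1) of K. Since X affinely
  spans the space, the M_n and b_n stay bounded; integral matrices cannot accumulate unless
  eventually constant, so along a subsequence M_n = M and b_n converges to some b. Then
  M X + b lies in K, and as M is invertible this copy of X is full-dimensional, contradicting
  that K is not.
\<close>

lemma linear_family_bounded_on_span:
  fixes f :: "'i \<Rightarrow> 'a::real_vector \<Rightarrow> 'b::real_normed_vector"
  assumes lin: "\<And>n. linear (f n)"
    and bounded_on_S: "\<And>x. x \<in> S \<Longrightarrow> \<exists>B. \<forall>n. norm (f n x) \<le> B"
    and v: "v \<in> span S"
  shows "\<exists>B. \<forall>n. norm (f n v) \<le> B"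
  using v
proof (induction rule: span_induct_alt)
  case base
  then show ?case using lin by (auto simp: linear_0)
next
  case (step c x y)
  obtain B1 where B1: "\<forall>n. norm (f n x) \<le> B1" using bounded_on_S step by blast
  obtain B2 where B2: "\<forall>n. norm (f n y) \<le> B2" using step by blast
  have "norm (f n (c *\<^sub>R x + y)) \<le> \<bar>c\<bar> * B1 + B2" for n
  proof -
    have "f n (c *\<^sub>R x + y) = c *\<^sub>R f n x + f n y"
      using lin[of n] by (simp add: linear_add linear_scale)
    also have "norm \<dots> \<le> \<bar>c\<bar> * norm (f n x) + norm (f n y)"
      by (metis norm_scaleR norm_triangle_ineq)
    also have "\<dots> \<le> \<bar>c\<bar> * B1 + B2"
      using B1 B2 by (simp add: add_mono mult_left_mono)
    finally show ?thesis .
  qed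
  then show ?case by blast
qed

lemma Ints_eq_if_abs_diff_less_1:
  fixes a b :: real
  assumes "a \<in> \<int>" "b \<in> \<int>" "\<bar>a - b\<bar> < 1"
  shows "a = b"
proof -
  obtain i j where "a = of_int i" "b = of_int j" using assms by (auto elim!: Ints_cases)
  moreover have "\<bar>i - j\<bar> < 1" using assms(3) calculation
    by (metis of_int_abs of_int_diff of_int_less_1_iff)
  ultimately show ?thesis by simp
qed

lemma norm_matrix_le_sum_columns:
  fixes M :: "real^'n^'m"
  shows "norm M \<le> real CARD('m) * (\<Sum>j\<in>UNIV. norm (M *v axis j 1))"
proof -
  have entry: "\<bar>M $ i $ j\<bar> \<le> norm (M *v axis j 1)" for i j
  proof -
    have "M $ i $ j = (M *v axis j 1) $ i"
      by (simp add: matrix_vector_mult_basis column_def)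
    then show ?thesis by (metis component_le_norm_cart)
  qed
  have "norm M \<le> (\<Sum>i\<in>UNIV. norm (M $ i))"
    unfolding norm_vec_def by (rule L2_set_le_sum) auto
  also have "\<dots> \<le> (\<Sum>i\<in>UNIV. \<Sum>j\<in>UNIV. \<bar>M $ i $ j\<bar>)"
    by (intro sum_mono norm_le_l1_cart)
  also have "\<dots> \<le> (\<Sum>i\<in>(UNIV::'m set). \<Sum>j\<in>UNIV. norm (M *v axis j 1))"
    by (intro sum_mono entry)
  finally show ?thesis by simp
qed

lemma Ints_matrix_seq_eventually_const:
  fixes F :: "nat \<Rightarrow> real^'n^'m"
  assumes ints: "\<And>n i j. F n $ i $ j \<in> \<int>" and lim: "F \<longlonglongrightarrow> l"
  shows "\<exists>N. \<forall>n\<ge>N. F n = F N"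
proof -
  obtain N where N: "\<And>n. n \<ge> N \<Longrightarrow> dist (F n) l < 1/2"
    using lim unfolding LIMSEQ_def by (meson half_gt_zero zero_less_one)
  have "F n = F N" if "n \<ge> N" for n
  proof -
    have close: "norm (F n - F N) < 1"
      using N[OF that] N[of N] dist_triangle2[of "F n" "F N" l] by (simp add: dist_norm)
    have "\<bar>F n $ i $ j - F N $ i $ j\<bar> < 1" for i j
      using component_le_norm_cart[of "(F n - F N) $ i" j]
        Finite_Cartesian_Product.norm_nth_le[of "F n - F N" i] close
      by simp
    then show ?thesis using ints Ints_eq_if_abs_diff_less_1 by (simp add: vec_eq_iff)
  qed
  then show ?thesis by blast
qed

lemma Ints_matrix_seq_const_subseq:
  fixes F :: "nat \<Rightarrow> real^'n^'m"
  assumes ints: "\<And>n i j. F n $ i $ j \<in> \<int>" and "bounded (range F)"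
  obtains r :: "nat \<Rightarrow> nat" and M where "strict_mono r" "\<And>n. F (r n) = M"
proof -
  obtain l r where r: "strict_mono r" "(F \<circ> r) \<longlonglongrightarrow> l"
    using bounded_imp_convergent_subsequence \<open>bounded (range F)\<close> by blast
  have "\<And>n i j. (F \<circ> r) n $ i $ j \<in> \<int>"
    using ints by simp
  from Ints_matrix_seq_eventually_const[OF this r(2)]
  obtain N where N: "\<forall>n\<ge>N. (F \<circ> r) n = (F \<circ> r) N" ..
  have "strict_mono (\<lambda>n. r (n + N))"
    using r(1) by (simp add: strict_mono_def)
  moreover have "F (r (n + N)) = F (r N)" for n
    using N[rule_format, of "n + N"] by simp
  ultimately show thesis by (rule that)
qed

lemma bounded_range_matrix_if_pointwise_bounded:
  fixes M :: "'i \<Rightarrow> real^'n^'m"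
  assumes "\<And>v. \<exists>B. \<forall>n. norm (M n *v v) \<le> B"
  shows "bounded (range M)"
proof -
  obtain B where B: "\<And>v n. norm (M n *v v) \<le> B v"
    using assms by metis
  have "norm (M n) \<le> real CARD('m) * (\<Sum>j\<in>UNIV. B (axis j 1))" for n
  proof -
    have "(\<Sum>j\<in>UNIV. norm (M n *v axis j 1)) \<le> (\<Sum>j\<in>UNIV. B (axis j 1))"
      by (intro sum_mono B)
    then have "real CARD('m) * (\<Sum>j\<in>UNIV. norm (M n *v axis j 1))
        \<le> real CARD('m) * (\<Sum>j\<in>UNIV. B (axis j 1))"
      by (rule mult_left_mono) simp
    then show ?thesis
      using norm_matrix_le_sum_columns[of "M n"] by linarith
  qed
  then show ?thesis
    unfolding bounded_iff by blast
qed

lemma bounded_affine_maps_if_bounded_on_affine_hull_UNIV: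
  fixes M :: "'i \<Rightarrow> real^'n^'m" and b :: "'i \<Rightarrow> real^'m" and X :: "(real^'n) set"
  assumes X: "affine hull X = UNIV"
    and C: "\<And>n x. x \<in> X \<Longrightarrow> norm (M n *v x + b n) \<le> C"
  shows "bounded (range M)" "bounded (range b)"
proof -
  obtain x0 where x0: "x0 \<in> X" using X by force
  have span_UNIV: "v \<in> span ((\<lambda>x. - x0 + x) ` (X - {x0}))" for v
    using affine_hull_span2[OF x0] X
    by (metis (no_types, lifting) UNIV_I add_left_cancel image_iff)
  have pointwise: "\<exists>B. \<forall>n. norm (M n *v v) \<le> B" for v
  proof (rule linear_family_bounded_on_span[OF _ _ span_UNIV])
    fix y assume "y \<in> (\<lambda>x. - x0 + x) ` (X - {x0})"
    then obtain x where x: "x \<in> X" "y = x - x0" by auto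
    have "norm (M n *v y) \<le> C + C" for n
    proof -
      have "M n *v y = (M n *v x + b n) - (M n *v x0 + b n)"
        using x by (simp add: matrix_vector_mult_diff_distrib)
      then have "norm (M n *v y) \<le> norm (M n *v x + b n) + norm (M n *v x0 + b n)"
        by (metis norm_triangle_ineq4)
      then show ?thesis
        using C[OF x(1), of n] C[OF x0, of n] by linarith
    qed
    then show "\<exists>B. \<forall>n. norm (M n *v y) \<le> B" by blast
  qed simp
  then show "bounded (range M)"
    by (rule bounded_range_matrix_if_pointwise_bounded)
  obtain B where B: "\<And>n. norm (M n *v x0) \<le> B"
    using pointwise by blast
  have "norm (b n) \<le> C + B" for n
  proof -
    have "norm (b n) \<le> norm (M n *v x0 + b n) + norm (M n *v x0)"
      using norm_triangle_ineq4[of "M n *v x0 + b n" "M n *v x0"] by simp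
    then show ?thesis
      using C[OF x0, of n] B[of n] by linarith
  qed
  then show "bounded (range b)"
    unfolding bounded_iff by blast
qed

lemma aff_dim_invertible_affine_image:
  fixes M :: "real^'n^'n"
  assumes "invertible M"
  shows "aff_dim ((\<lambda>x. M *v x + b) ` X) = aff_dim X"
proof -
  have "inj ((*v) M)"
    using assms matrix_left_invertible_injective invertible_def by blast
  moreover have "(\<lambda>x. M *v x + b) ` X = (+) b ` ((*v) M ` X)"
    by (auto simp: image_image add.commute)
  ultimately show ?thesis
    by (simp add: aff_dim_translation_eq)
qed

lemma norm_le_bound_plus_infdist:
  fixes K :: "'a::{heine_borel,real_normed_vector} set"
  assumes "closed K" "K \<noteq> {}" "\<forall>k\<in>K. norm k \<le> R"
  shows "norm y \<le> R + infdist y K"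
proof -
  obtain k where k: "k \<in> K" "infdist y K = dist y k"
    using infdist_attains_inf[OF assms(1,2)] by blast
  have "norm y \<le> norm k + norm (y - k)"
    by (rule norm_triangle_sub)
  moreover have "norm k \<le> R"
    using assms(3) k(1) by blast
  ultimately show ?thesis
    using k(2) by (simp add: dist_norm)
qed

lemma mem_closed_if_infdist_le_tendsto_0:
  assumes "closed K" "K \<noteq> {}" "f \<longlonglongrightarrow> y"
    and "\<And>n. infdist (f n) K \<le> e n" "e \<longlonglongrightarrow> 0"
  shows "y \<in> K"
proof -
  have "(\<lambda>n. infdist (f n) K) \<longlonglongrightarrow> 0"
  proof (rule tendsto_sandwich[OF always_eventually always_eventually])
    show "\<forall>n. 0 \<le> infdist (f n) K" by (simp add: infdist_nonneg)
    show "\<forall>n. infdist (f n) K \<le> e n" using assms(4) by blast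
  qed (use assms(5) in auto)
  moreover have "(\<lambda>n. infdist (f n) K) \<longlonglongrightarrow> infdist y K"
    using assms(3) by (rule tendsto_infdist)
  ultimately have "infdist y K = 0"
    using LIMSEQ_unique by blast
  then show ?thesis
    using in_closed_iff_infdist_zero[OF assms(1,2)] by blast
qed

lemma limit_of_GL_int_copies_approaching_compact:
  fixes M :: "nat \<Rightarrow> real^'n^'n" and K X :: "(real^'n) set"
  assumes K: "compact K" "K \<noteq> {}"
    and X: "affine hull X = UNIV"
    and GL: "\<And>n. M n \<in> GL_int"
    and e: "e \<longlonglongrightarrow> 0"
    and near: "\<And>n x. x \<in> X \<Longrightarrow> infdist (M n *v x + b n) K \<le> e n"
  obtains M0 b0 where "invertible M0" "(\<lambda>x. M0 *v x + b0) ` X \<subseteq> K"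
proof -
  obtain R where R: "\<forall>k\<in>K. norm k \<le> R"
    using compact_imp_bounded[OF K(1)] unfolding bounded_iff by blast
  obtain E where E: "\<forall>n. norm (e n) \<le> E"
    using convergent_imp_bounded[OF e] unfolding bounded_iff by blast
  have bound: "norm (M n *v x + b n) \<le> R + E" if "x \<in> X" for n x
    using norm_le_bound_plus_infdist[OF compact_imp_closed[OF K(1)] K(2) R, of "M n *v x + b n"]
      near[OF that, of n] E[rule_format, of n] by (simp add: abs_le_iff)
  note bounded = bounded_affine_maps_if_bounded_on_affine_hull_UNIV
    [where M = M and b = b and C = "R + E", OF X bound]
  have ints: "\<And>n i j. M n $ i $ j \<in> \<int>"
    using GL unfolding GL_int_def mem_Collect_eq by blast
  obtain r1 :: "nat \<Rightarrow> nat" and M0 where r1: "strict_mono r1" "\<And>n. M (r1 n) = M0"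
    using Ints_matrix_seq_const_subseq[OF ints bounded(1)] by blast
  have "bounded (range (b \<circ> r1))"
    using bounded(2) by (rule bounded_subset) auto
  then obtain b0 and r2 :: "nat \<Rightarrow> nat" where r2: "strict_mono r2" "((b \<circ> r1) \<circ> r2) \<longlonglongrightarrow> b0"
    using bounded_imp_convergent_subsequence by blast
  define r where "r = r1 \<circ> r2"
  have "strict_mono r"
    unfolding r_def using r1(1) r2(1) by (rule strict_mono_o)
  have "M0 *v x + b0 \<in> K" if x: "x \<in> X" for x
  proof (rule mem_closed_if_infdist_le_tendsto_0[OF compact_imp_closed[OF K(1)] K(2)])
    show "(\<lambda>n. M0 *v x + b (r n)) \<longlonglongrightarrow> M0 *v x + b0"
      using r2(2) unfolding r_def comp_def by (intro tendsto_add tendsto_const)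
    show "infdist (M0 *v x + b (r n)) K \<le> (e \<circ> r) n" for n
      using near[OF x, of "r n"] r1(2) unfolding r_def comp_def by simp
    show "(e \<circ> r) \<longlonglongrightarrow> 0"
      using e \<open>strict_mono r\<close> by (rule LIMSEQ_subseq_LIMSEQ)
  qed
  moreover have "invertible M0"
    using GL[of "r1 0"] unfolding r1(2) GL_int_def mem_Collect_eq by blast
  ultimately show thesis
    using that by blast
qed

definition thickening :: "(real^'n) set \<Rightarrow> real \<Rightarrow> (real^'n) set" where
  "thickening K e = {x + y | x y. x \<in> K \<and> y \<in> cball 0 e}"

lemma subset_thickening:
  assumes "e \<ge> 0"
  shows "K \<subseteq> thickening K e"
proof
  fix x assume "x \<in> K"
  moreover have "x = x + 0" "0 \<in> cball 0 e" using assms by simp_all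
  ultimately show "x \<in> thickening K e"
    unfolding thickening_def by blast
qed

lemma infdist_le_if_in_thickening:
  assumes "z \<in> thickening K e"
  shows "infdist z K \<le> e"
proof -
  obtain x y where "z = x + y" "x \<in> K" "norm y \<le> e"
    using assms unfolding thickening_def by auto
  then have "dist z x \<le> e" by (simp add: dist_norm)
  with \<open>x \<in> K\<close> show ?thesis
    using infdist_le order_trans by blast
qed

lemma convex_body_thickening:
  assumes "convex_body K" "e \<ge> 0"
  shows "convex_body (thickening K e)"
proof -
  have K: "K \<noteq> {}" "compact K" "convex K"
    using assms(1) by (auto simp: convex_body_def)
  have "thickening K e \<noteq> {}"
    using K(1) subset_thickening[OF assms(2)] by blast
  moreover have "compact (thickening K e)"
    unfolding thickening_def using K(2) by (intro compact_sums compact_cball)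
  moreover have "thickening K e = (\<Union>x\<in>K. \<Union>y\<in>cball 0 e. {x + y})"
    unfolding thickening_def by blast
  then have "convex (thickening K e)"
    using K(3) by (simp add: convex_sums)
  ultimately show ?thesis
    unfolding convex_body_def by blast
qed

lemma aff_dim_thickening:
  fixes K :: "(real^'n) set"
  assumes "K \<noteq> {}" "e > 0"
  shows "aff_dim (thickening K e) = int CARD('n)"
proof -
  obtain k where k: "k \<in> K" using assms by blast
  have "ball k e \<subseteq> thickening K e"
  proof
    fix z assume "z \<in> ball k e"
    then have "z - k \<in> cball 0 e" by (simp add: dist_norm norm_minus_commute)
    moreover have "z = k + (z - k)" by simp
    ultimately show "z \<in> thickening K e"
      unfolding thickening_def using k by blast
  qed
  then have "aff_dim (ball k e) \<le> aff_dim (thickening K e)"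
    by (rule aff_dim_subset)
  moreover have "aff_dim (ball k e) = int CARD('n)"
    using aff_dim_open[of "ball k e"] assms(2) by simp
  ultimately show ?thesis
    using aff_dim_le_DIM[of "thickening K e"] by simp
qed

lemma not_AX_freeE:
  assumes "\<not> AX_free A X L"
  obtains M b where "M \<in> GL_int" "(\<lambda>x. M *v x + b) ` X \<subseteq> L"
proof -
  obtain Y M b where "M \<in> GL_int" "Y = (\<lambda>x. M *v x + b) ` X" "Y \<subseteq> rel_interior L"
    using assms unfolding AX_free_def unimodular_copy_def by blast
  then show thesis
    using that rel_interior_subset by blast
qed

lemma AX_free_thickening_if_aff_dim_less:
  fixes K X :: "(real^'n) set"
  assumes K: "compact K" "K \<noteq> {}"
    and X: "affine hull X = UNIV"
    and low: "aff_dim K < int CARD('n)"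
  obtains e where "e > 0" "AX_free A X (thickening K e)"
proof -
  define e where "e n = inverse (real (Suc n))" for n
  have "\<exists>n. AX_free A X (thickening K (e n))"
  proof (rule ccontr)
    assume "\<nexists>n. AX_free A X (thickening K (e n))"
    then have "\<forall>n. \<exists>M b. M \<in> GL_int \<and> (\<lambda>x. M *v x + b) ` X \<subseteq> thickening K (e n)"
      using not_AX_freeE by blast
    then obtain M b where GL: "\<And>n. M n \<in> GL_int"
      and copy: "\<And>n. (\<lambda>x. M n *v x + b n) ` X \<subseteq> thickening K (e n)"
      by metis
    have "e \<longlonglongrightarrow> 0"
      unfolding e_def by (rule LIMSEQ_inverse_real_of_nat)
    moreover have "infdist (M n *v x + b n) K \<le> e n" if "x \<in> X" for n x
      using copy[of n] that by (blast intro: infdist_le_if_in_thickening)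
    ultimately obtain M0 b0 where M0: "invertible M0" and in_K: "(\<lambda>x. M0 *v x + b0) ` X \<subseteq> K"
      using limit_of_GL_int_copies_approaching_compact[where M = M and b = b and e = e, OF K X GL]
      by blast
    have "aff_dim X \<le> aff_dim K"
      using aff_dim_subset[OF in_K] aff_dim_invertible_affine_image[OF M0] by simp
    then show False
      using low X aff_dim_eq_full[of X] by simp
  qed
  moreover have "e n > 0" for n
    by (simp add: e_def)
  ultimately show thesis
    using that by blast
qed

theorem lemma2p5:
  fixes A :: "real set" and X K :: "(real^'n) set"
  assumes "A = \<int> \<or> A = UNIV"
    and "bounded X"
    and "aff_dim (convex hull X) = int CARD('n)"
    and "convex_body K"
    and "AX_free A X K"
  shows "\<exists>L. convex_body L \<and> aff_dim L = int CARD('n) \<and> K \<subseteq> L \<and> AX_free A X L"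
proof (cases "aff_dim K = int CARD('n)")
  case True
  then show ?thesis using assms by blast
next
  case False
  have K: "compact K" "K \<noteq> {}" using assms(4) by (auto simp: convex_body_def)
  have X: "affine hull X = UNIV"
    using assms(3) aff_dim_eq_full[of X] by (simp add: aff_dim_convex_hull)
  have "aff_dim K < int CARD('n)"
    using False aff_dim_le_DIM[of K] by simp
  then obtain e where e: "e > 0" and "AX_free A X (thickening K e)"
    using AX_free_thickening_if_aff_dim_less[OF K X] by blast
  then show ?thesis
    using convex_body_thickening[OF assms(4) less_imp_le[OF e]] aff_dim_thickening[OF K(2) e]
      subset_thickening[OF less_imp_le[OF e]] by blast
qed

end
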